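(* Let $(\mathcal{E},\mathcal{L},\mathcal{B})$ be a weakly left resolving labelled space whose accommodating family $\mathcal{B}$ is closed under relative complements, and let $S$ be its associated inverse semigroup. A filter in $E(S)$ of infinite type is tight if and only if it is an ultrafilter.
   Context: A directed graph $\mathcal{E}=(\mathcal{E}^0,\mathcal{E}^1,r,s)$ has countable nonempty vertex set, edge set, range/source maps; paths satisfy $r(\lambda_i)=s(\lambda_{i+1})$. A labelled graph has a surjective labelling $\mathcal{L}:\mathcal{E}^1\to\mathcal{A}$ extended letterwise to finite and infinite paths. $\omega$ is the empty word, $\mathcal{L}^+=\bigcup_{n\ge1}\mathcal{L}(\mathcal{E}^n)$, $\mathcal{L}^*=\{\omega\}\cup\mathcal{L}^+$, $\mathcal{L}^\infty$ the labels of infinite paths. For $A\subseteq\mathcal{E}^0$, $\alpha\in\mathcal{L}^+$: $r(A,\alpha)=\{r(\lambda):\mathcal{L}(\lambda)=\alpha,\ s(\lambda)\in A\}$, $r(A,\omega)=A$, $r(\alpha)=r(\mathcal{E}^0,\alpha)$. $\mathcal{B}$ accommodating: closed under $r(\cdot,\alpha)$, finite intersections and unions, contains $r(\alpha)$ for $\alpha\in\mathcal{L}^+$; labelled space weakly left resolving if $r(A\cap B,\alpha)=r(A,\alpha)\cap r(B,\alpha)$ for $A,B\in\mathcal{B}$, $\alpha\in\mathcal{L}^+$. $\mathcal{B}_\alpha=\mathcal{B}\cap\mathcal{P}(r(\alpha))$. $S$ = triples $(\alpha,A,\beta)$, $\alpha,\beta\in\mathcal{L}^*$, $\emptyset\ne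 A\in\mathcal{B}_\alpha\cap\mathcal{B}_\beta$, plus $0$; product $(\alpha,A,\beta)(\gamma,B,\delta)=(\alpha\gamma',r(A,\gamma')\cap B,\delta)$ if $\gamma=\beta\gamma'$, $=(\alpha,A\cap r(B,\beta'),\delta\beta')$ if $\beta=\gamma\beta'$, $=0$ otherwise (empty middle entry identified with $0$). $E(S)=\{(\alpha,A,\alpha)\}\cup\{0\}$, $p\le q$ iff $pq=p$. A filter in a poset with least element $0$ is a nonempty upward-closed subset not containing $0$ in which any two elements have a common lower bound in it; an ultrafilter is a maximal filter. The words of elements of a filter $\xi$ in $E(S)$ are pairwise comparable; $\xi$ is of infinite type if there is no longest such word. For $x\in E(S)$, $Z\subseteq\{y:y\le x\}$ is a cover for $x$ if for every nonzero $y\le x$ there is $z\in Z$ with $zy\neq0$; a filter $\xi$ is tight if for every $x\in\xi$ and every finite cover $Z$ of $x$, $Z\cap\xi\neq\emptyset$. *)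

theory Defs
  imports Main "HOL-Library.Sublist" "HOL-Library.Countable_Set"
begin

text \<open>A directed graph is given by a vertex type 'v, an edge type 'e and
source/range maps; a labelling is a map from edges to an alphabet 'a
(the alphabet is taken to be the image of the labelling, so the labelling
is surjective onto it).\<close>

definition is_path :: "('e \<Rightarrow> 'v) \<Rightarrow> ('e \<Rightarrow> 'v) \<Rightarrow> 'e list \<Rightarrow> bool" where
  "is_path src rng es \<longleftrightarrow> es \<noteq> [] \<and>
     (\<forall>i. Suc i < length es \<longrightarrow> rng (es ! i) = src (es ! Suc i))"

definition Lplus :: "('e \<Rightarrow> 'v) \<Rightarrow> ('e \<Rightarrow> 'v) \<Rightarrow> ('e \<Rightarrow> 'a) \<Rightarrow> 'a list set" where
  "Lplus src rng lab = {map lab es | es. is_path src rng es}"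

definition Lstar :: "('e \<Rightarrow> 'v) \<Rightarrow> ('e \<Rightarrow> 'v) \<Rightarrow> ('e \<Rightarrow> 'a) \<Rightarrow> 'a list set" where
  "Lstar src rng lab = insert [] (Lplus src rng lab)"

definition rel_range :: "('e \<Rightarrow> 'v) \<Rightarrow> ('e \<Rightarrow> 'v) \<Rightarrow> ('e \<Rightarrow> 'a) \<Rightarrow> 'v set \<Rightarrow> 'a list \<Rightarrow> 'v set" where
  "rel_range src rng lab A \<alpha> =
     (if \<alpha> = [] then A
      else {rng (last es) | es. is_path src rng es \<and> map lab es = \<alpha> \<and> src (hd es) \<in> A})"

definition accommodating :: "('e \<Rightarrow> 'v) \<Rightarrow> ('e \<Rightarrow> 'v) \<Rightarrow> ('e \<Rightarrow> 'a) \<Rightarrow> 'v set set \<Rightarrow> bool" where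
  "accommodating src rng lab B \<longleftrightarrow>
     (\<forall>A\<in>B. \<forall>\<alpha>\<in>Lplus src rng lab. rel_range src rng lab A \<alpha> \<in> B) \<and>
     (\<forall>A\<in>B. \<forall>C\<in>B. A \<inter> C \<in> B \<and> A \<union> C \<in> B) \<and>
     (\<forall>\<alpha>\<in>Lplus src rng lab. rel_range src rng lab UNIV \<alpha> \<in> B)"

definition weakly_left_resolving :: "('e \<Rightarrow> 'v) \<Rightarrow> ('e \<Rightarrow> 'v) \<Rightarrow> ('e \<Rightarrow> 'a) \<Rightarrow> 'v set set \<Rightarrow> bool" where
  "weakly_left_resolving src rng lab B \<longleftrightarrow>
     (\<forall>A\<in>B. \<forall>C\<in>B. \<forall>\<alpha>\<in>Lplus src rng lab.
        rel_range src rng lab (A \<inter> C) \<alpha> = rel_range src rng lab A \<alpha> \<inter> rel_range src rng lab C \<alpha>)"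

definition closed_rel_compl :: "'v set set \<Rightarrow> bool" where
  "closed_rel_compl B \<longleftrightarrow> (\<forall>A\<in>B. \<forall>C\<in>B. A - C \<in> B)"

definition B_of :: "('e \<Rightarrow> 'v) \<Rightarrow> ('e \<Rightarrow> 'v) \<Rightarrow> ('e \<Rightarrow> 'a) \<Rightarrow> 'v set set \<Rightarrow> 'a list \<Rightarrow> 'v set set" where
  "B_of src rng lab B \<alpha> = {A \<in> B. A \<subseteq> rel_range src rng lab UNIV \<alpha>}"

text \<open>The inverse semigroup S: None represents 0, Some (alpha, A, beta) a triple.\<close>
type_synonym ('a, 'v) selt = "('a list \<times> 'v set \<times> 'a list) option"

definition S_set :: "('e \<Rightarrow> 'v) \<Rightarrow> ('e \<Rightarrow> 'v) \<Rightarrow> ('e \<Rightarrow> 'a) \<Rightarrow> 'v set set \<Rightarrow> ('a, 'v) selt set" where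
  "S_set src rng lab B = insert None
     {Some (\<alpha>, A, \<beta>) | \<alpha> A \<beta>. \<alpha> \<in> Lstar src rng lab \<and> \<beta> \<in> Lstar src rng lab \<and> A \<noteq> {} \<and>
        A \<in> B_of src rng lab B \<alpha> \<and> A \<in> B_of src rng lab B \<beta>}"

definition mk_triple :: "'a list \<Rightarrow> 'v set \<Rightarrow> 'a list \<Rightarrow> ('a, 'v) selt" where
  "mk_triple \<alpha> A \<beta> = (if A = {} then None else Some (\<alpha>, A, \<beta>))"

definition S_mult :: "('e \<Rightarrow> 'v) \<Rightarrow> ('e \<Rightarrow> 'v) \<Rightarrow> ('e \<Rightarrow> 'a) \<Rightarrow> ('a, 'v) selt \<Rightarrow> ('a, 'v) selt \<Rightarrow> ('a, 'v) selt" where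
  "S_mult src rng lab p q =
     (case p of None \<Rightarrow> None
      | Some (\<alpha>, A, \<beta>) \<Rightarrow> (case q of None \<Rightarrow> None
        | Some (\<gamma>, C, \<delta>) \<Rightarrow>
            (if prefix \<beta> \<gamma> then
               (let \<gamma>' = drop (length \<beta>) \<gamma> in
                 mk_triple (\<alpha> @ \<gamma>') (rel_range src rng lab A \<gamma>' \<inter> C) \<delta>)
             else if prefix \<gamma> \<beta> then
               (let \<beta>' = drop (length \<gamma>) \<beta> in
                 mk_triple \<alpha> (A \<inter> rel_range src rng lab C \<beta>') (\<delta> @ \<beta>'))
             else None)))"

definition ES :: "('e \<Rightarrow> 'v) \<Rightarrow> ('e \<Rightarrow> 'v) \<Rightarrow> ('e \<Rightarrow> 'a) \<Rightarrow> 'v set set \<Rightarrow> ('a, 'v) selt set" where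
  "ES src rng lab B = {p \<in> S_set src rng lab B. p = None \<or> (\<exists>\<alpha> A. p = Some (\<alpha>, A, \<alpha>))}"

definition S_le :: "('e \<Rightarrow> 'v) \<Rightarrow> ('e \<Rightarrow> 'v) \<Rightarrow> ('e \<Rightarrow> 'a) \<Rightarrow> ('a, 'v) selt \<Rightarrow> ('a, 'v) selt \<Rightarrow> bool" where
  "S_le src rng lab p q \<longleftrightarrow> S_mult src rng lab p q = p"

definition is_filter :: "('e \<Rightarrow> 'v) \<Rightarrow> ('e \<Rightarrow> 'v) \<Rightarrow> ('e \<Rightarrow> 'a) \<Rightarrow> 'v set set \<Rightarrow> ('a, 'v) selt set \<Rightarrow> bool" where
  "is_filter src rng lab B \<xi> \<longleftrightarrow>
     \<xi> \<subseteq> ES src rng lab B \<and> \<xi> \<noteq> {} \<and> None \<notin> \<xi> \<and>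
     (\<forall>x\<in>\<xi>. \<forall>y\<in>ES src rng lab B. S_le src rng lab x y \<longrightarrow> y \<in> \<xi>) \<and>
     (\<forall>x\<in>\<xi>. \<forall>y\<in>\<xi>. \<exists>z\<in>\<xi>. S_le src rng lab z x \<and> S_le src rng lab z y)"

definition is_ultrafilter :: "('e \<Rightarrow> 'v) \<Rightarrow> ('e \<Rightarrow> 'v) \<Rightarrow> ('e \<Rightarrow> 'a) \<Rightarrow> 'v set set \<Rightarrow> ('a, 'v) selt set \<Rightarrow> bool" where
  "is_ultrafilter src rng lab B \<xi> \<longleftrightarrow>
     is_filter src rng lab B \<xi> \<and>
     (\<forall>\<eta>. is_filter src rng lab B \<eta> \<and> \<xi> \<subseteq> \<eta> \<longrightarrow> \<eta> = \<xi>)"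

definition filter_words :: "('a, 'v) selt set \<Rightarrow> 'a list set" where
  "filter_words \<xi> = {\<alpha>. \<exists>A. Some (\<alpha>, A, \<alpha>) \<in> \<xi>}"

definition infinite_type :: "('a, 'v) selt set \<Rightarrow> bool" where
  "infinite_type \<xi> \<longleftrightarrow> \<not> (\<exists>\<alpha>\<in>filter_words \<xi>. \<forall>\<beta>\<in>filter_words \<xi>. length \<beta> \<le> length \<alpha>)"

definition is_cover :: "('e \<Rightarrow> 'v) \<Rightarrow> ('e \<Rightarrow> 'v) \<Rightarrow> ('e \<Rightarrow> 'a) \<Rightarrow> 'v set set \<Rightarrow> ('a, 'v) selt \<Rightarrow> ('a, 'v) selt set \<Rightarrow> bool" where
  "is_cover src rng lab B x Z \<longleftrightarrow>
     Z \<subseteq> {y \<in> ES src rng lab B. S_le src rng lab y x} \<and>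
     (\<forall>y\<in>ES src rng lab B. y \<noteq> None \<and> S_le src rng lab y x \<longrightarrow>
        (\<exists>z\<in>Z. S_mult src rng lab z y \<noteq> None))"

definition is_tight :: "('e \<Rightarrow> 'v) \<Rightarrow> ('e \<Rightarrow> 'v) \<Rightarrow> ('e \<Rightarrow> 'a) \<Rightarrow> 'v set set \<Rightarrow> ('a, 'v) selt set \<Rightarrow> bool" where
  "is_tight src rng lab B \<xi> \<longleftrightarrow> is_filter src rng lab B \<xi> \<and>
     (\<forall>x\<in>\<xi>. \<forall>Z. finite Z \<and> is_cover src rng lab B x Z \<longrightarrow> Z \<inter> \<xi> \<noteq> {})"

end

theory Submission
  imports Defs
begin

text \<open>On idempotents the product is the meet, so \<open>E(S)\<close> is a semilattice with zero, and
in any such semilattice ultrafilters are tight: if a finite cover \<open>Z\<close> of \<open>x \<in> \<xi>\<close> missed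
the ultrafilter \<open>\<xi>\<close>, every \<open>z \<in> Z\<close> would be disjoint from some element of \<open>\<xi>\<close>, and a
common lower bound in \<open>\<xi>\<close> of \<open>x\<close> and of these elements would meet no \<open>z \<in> Z\<close>.

Conversely let \<open>\<xi>\<close> be tight of infinite type, \<open>\<eta> \<supseteq> \<xi>\<close> a filter and \<open>z = (b, C, b) \<in> \<eta>\<close>.
Since \<open>\<xi>\<close> has arbitrarily long words there is \<open>x = (a, A, a) \<in> \<xi>\<close> with \<open>b\<close> a prefix of
\<open>a\<close>, and \<open>u = z x = (a, D, a) \<in> \<eta>\<close> with \<open>D \<subseteq> A\<close>. Because \<open>\<B>\<close> is closed under relative
complements, \<open>{u, (a, A - D, a)}\<close> is a finite cover of \<open>x\<close>, so one of its members lies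
in \<open>\<xi>\<close>; it cannot be \<open>(a, A - D, a)\<close>, which is disjoint from \<open>u \<in> \<eta>\<close>. Hence \<open>u \<in> \<xi>\<close>
and therefore \<open>z \<in> \<xi>\<close>, i.e. \<open>\<eta> = \<xi>\<close>.\<close>

lemma is_path_Cons:
  "is_path src rng (e # es) \<longleftrightarrow> es = [] \<or> rng e = src (hd es) \<and> is_path src rng es"
proof
  assume path: "is_path src rng (e # es)"
  show "es = [] \<or> rng e = src (hd es) \<and> is_path src rng es"
  proof (cases "es = []")
    case False
    have "rng ((e # es) ! 0) = src ((e # es) ! Suc 0)"
      using path False unfolding is_path_def by (metis length_Cons length_greater_0_conv Suc_less_eq)
    then have "rng e = src (hd es)" using False by (simp add: hd_conv_nth)
    moreover have "is_path src rng es"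
      using path False unfolding is_path_def by (metis length_Cons Suc_less_eq nth_Cons_Suc)
    ultimately show ?thesis by blast
  qed simp
next
  assume "es = [] \<or> rng e = src (hd es) \<and> is_path src rng es"
  then show "is_path src rng (e # es)"
    unfolding is_path_def by (auto simp: hd_conv_nth nth_Cons split: nat.split)
qed

lemma is_path_append:
  assumes "es1 \<noteq> []" "es2 \<noteq> []"
  shows "is_path src rng (es1 @ es2) \<longleftrightarrow>
    is_path src rng es1 \<and> is_path src rng es2 \<and> rng (last es1) = src (hd es2)"
  using assms(1) by (induction es1) (auto simp: is_path_Cons assms(2))

context
  fixes src rng :: "'e \<Rightarrow> 'v" and lab :: "'e \<Rightarrow> 'a" and B :: "'v set set"
begin

abbreviation "rr \<equiv> rel_range src rng lab"
abbreviation "EE \<equiv> ES src rng lab B"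
abbreviation "sle \<equiv> S_le src rng lab"
abbreviation "smul \<equiv> S_mult src rng lab"
abbreviation "filt \<equiv> is_filter src rng lab B"

lemma rel_range_Nil [simp]: "rr A [] = A"
  by (simp add: rel_range_def)

lemma rel_range_empty [simp]: "rr {} \<alpha> = {}"
  by (auto simp: rel_range_def)

lemma rel_range_mono: "A \<subseteq> C \<Longrightarrow> rr A \<alpha> \<subseteq> rr C \<alpha>"
  by (auto simp: rel_range_def)

lemma rel_range_Un: "rr (A \<union> C) \<alpha> = rr A \<alpha> \<union> rr C \<alpha>"
  by (auto simp: rel_range_def)

lemma rel_range_not_label: "\<alpha> \<noteq> [] \<Longrightarrow> \<alpha> \<notin> Lplus src rng lab \<Longrightarrow> rr A \<alpha> = {}"
  by (auto simp: rel_range_def Lplus_def)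

lemma is_path_split_labels:
  assumes "is_path src rng es" "map lab es = \<alpha> @ \<beta>" "\<alpha> \<noteq> []" "\<beta> \<noteq> []"
  obtains es1 es2 where "es = es1 @ es2" "is_path src rng es1" "is_path src rng es2"
    "rng (last es1) = src (hd es2)" "map lab es1 = \<alpha>" "map lab es2 = \<beta>"
proof
  show "es = take (length \<alpha>) es @ drop (length \<alpha>) es" by simp
  show labels: "map lab (take (length \<alpha>) es) = \<alpha>" "map lab (drop (length \<alpha>) es) = \<beta>"
    using assms(2) by (metis append_eq_conv_conj take_map drop_map)+
  then have "take (length \<alpha>) es \<noteq> []" "drop (length \<alpha>) es \<noteq> []" using assms(3,4) by auto
  moreover have "is_path src rng (take (length \<alpha>) es @ drop (length \<alpha>) es)" using assms(1) by simp
  ultimately show "is_path src rng (take (length \<alpha>) es)" "is_path src rng (drop (length \<alpha>) es)"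
      "rng (last (take (length \<alpha>) es)) = src (hd (drop (length \<alpha>) es))"
    using is_path_append by blast+
qed

lemma rel_range_append: "rr A (\<alpha> @ \<beta>) = rr (rr A \<alpha>) \<beta>"
proof (cases "\<alpha> = [] \<or> \<beta> = []")
  case False
  then have \<alpha>: "\<alpha> \<noteq> []" and \<beta>: "\<beta> \<noteq> []" by auto
  show ?thesis
  proof
    show "rr A (\<alpha> @ \<beta>) \<subseteq> rr (rr A \<alpha>) \<beta>"
    proof
      fix x assume "x \<in> rr A (\<alpha> @ \<beta>)"
      then obtain es where es: "x = rng (last es)" "is_path src rng es" "map lab es = \<alpha> @ \<beta>"
          "src (hd es) \<in> A"
        using \<alpha> by (auto simp: rel_range_def)
      obtain es1 es2 where "es = es1 @ es2" "is_path src rng es1" "is_path src rng es2"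
          "rng (last es1) = src (hd es2)" "map lab es1 = \<alpha>" "map lab es2 = \<beta>"
        by (rule is_path_split_labels[OF es(2,3) \<alpha> \<beta>])
      moreover have "es1 \<noteq> []" "es2 \<noteq> []" using calculation \<alpha> \<beta> by auto
      ultimately have "src (hd es2) \<in> rr A \<alpha>" and "x = rng (last es2)" and "src (hd es1) \<in> A"
        using es \<alpha> by (auto simp: rel_range_def intro!: exI[of _ es1])
      with \<open>is_path src rng es2\<close> \<open>map lab es2 = \<beta>\<close> \<beta> show "x \<in> rr (rr A \<alpha>) \<beta>"
        by (auto simp: rel_range_def)
    qed
  next
    show "rr (rr A \<alpha>) \<beta> \<subseteq> rr A (\<alpha> @ \<beta>)"
    proof
      fix x assume "x \<in> rr (rr A \<alpha>) \<beta>"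
      then obtain es1 es2 where es: "x = rng (last es2)" "is_path src rng es2" "map lab es2 = \<beta>"
          "src (hd es2) = rng (last es1)" "is_path src rng es1" "map lab es1 = \<alpha>" "src (hd es1) \<in> A"
        using \<alpha> \<beta> by (auto simp: rel_range_def)
      then have "es1 \<noteq> []" "es2 \<noteq> []" using \<alpha> \<beta> by auto
      then have "is_path src rng (es1 @ es2)" using es is_path_append by metis
      with es \<open>es1 \<noteq> []\<close> \<open>es2 \<noteq> []\<close> \<alpha> show "x \<in> rr A (\<alpha> @ \<beta>)"
        unfolding rel_range_def by (auto intro!: exI[of _ "es1 @ es2"])
    qed
  qed
qed auto

lemma ES_Some_iff:
  "Some (\<alpha>, A, \<beta>) \<in> EE \<longleftrightarrow>
    \<alpha> = \<beta> \<and> \<alpha> \<in> Lstar src rng lab \<and> A \<noteq> {} \<and> A \<in> B \<and> A \<subseteq> rr UNIV \<alpha>"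
  by (auto simp: ES_def S_set_def B_of_def)

lemma ES_None [simp]: "None \<in> EE"
  by (auto simp: ES_def S_set_def)

lemma ES_cases:
  assumes "x \<in> EE"
  obtains "x = None"
  | \<alpha> A where "x = Some (\<alpha>, A, \<alpha>)" "\<alpha> \<in> Lstar src rng lab" "A \<noteq> {}" "A \<in> B"
      "A \<subseteq> rr UNIV \<alpha>"
  using assms by (cases x) (auto simp: ES_Some_iff)

lemma mk_triple_eq_None [simp]: "mk_triple \<alpha> A \<beta> = None \<longleftrightarrow> A = {}"
  by (simp add: mk_triple_def)

lemma mk_triple_eq_Some [simp]:
  "mk_triple \<alpha> A \<beta> = Some (\<gamma>, C, \<delta>) \<longleftrightarrow> A \<noteq> {} \<and> \<alpha> = \<gamma> \<and> A = C \<and> \<beta> = \<delta>"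
  by (auto simp: mk_triple_def)

lemma S_mult_None_left [simp]: "smul None y = None"
  by (simp add: S_mult_def)

lemma S_mult_None_right [simp]: "smul x None = None"
  by (cases x) (auto simp: S_mult_def)

lemma S_mult_append_right:
  "smul (Some (\<alpha>, A, \<alpha>)) (Some (\<alpha> @ \<gamma>, C, \<alpha> @ \<gamma>)) = mk_triple (\<alpha> @ \<gamma>) (rr A \<gamma> \<inter> C) (\<alpha> @ \<gamma>)"
  by (simp add: S_mult_def Let_def)

lemma S_mult_append_left:
  "smul (Some (\<alpha> @ \<gamma>, A, \<alpha> @ \<gamma>)) (Some (\<alpha>, C, \<alpha>)) = mk_triple (\<alpha> @ \<gamma>) (A \<inter> rr C \<gamma>) (\<alpha> @ \<gamma>)"
  by (cases "\<gamma> = []") (auto simp: S_mult_def Let_def Int_commute)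

lemma S_mult_same_word: "smul (Some (\<alpha>, A, \<alpha>)) (Some (\<alpha>, C, \<alpha>)) = mk_triple \<alpha> (A \<inter> C) \<alpha>"
  using S_mult_append_right[of \<alpha> A "[]" C] by simp

lemma S_mult_incomparable:
  "\<not> prefix \<alpha> \<beta> \<Longrightarrow> \<not> prefix \<beta> \<alpha> \<Longrightarrow> smul (Some (\<alpha>, A, \<alpha>)) (Some (\<beta>, C, \<beta>)) = None"
  by (simp add: S_mult_def)

lemma S_mult_idempotent_cases:
  obtains \<gamma> where "\<beta> = \<alpha> @ \<gamma>"
      "smul (Some (\<alpha>, A, \<alpha>)) (Some (\<beta>, C, \<beta>)) = mk_triple \<beta> (rr A \<gamma> \<inter> C) \<beta>"
  | \<gamma> where "\<alpha> = \<beta> @ \<gamma>"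
      "smul (Some (\<alpha>, A, \<alpha>)) (Some (\<beta>, C, \<beta>)) = mk_triple \<alpha> (A \<inter> rr C \<gamma>) \<alpha>"
  | "smul (Some (\<alpha>, A, \<alpha>)) (Some (\<beta>, C, \<beta>)) = None"
  by (metis prefix_def S_mult_append_right S_mult_append_left S_mult_incomparable)

lemma S_le_None_iff [simp]: "sle x None \<longleftrightarrow> x = None"
  by (auto simp: S_le_def)

lemma None_S_le [simp]: "sle None y"
  by (simp add: S_le_def)

lemma S_le_idempotent_iff:
  assumes "E \<noteq> {}"
  shows "sle (Some (\<delta>, E, \<delta>)) (Some (\<alpha>, A, \<alpha>)) \<longleftrightarrow> (\<exists>\<gamma>. \<delta> = \<alpha> @ \<gamma> \<and> E \<subseteq> rr A \<gamma>)"
proof (cases "prefix \<alpha> \<delta>")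
  case True
  then obtain \<gamma> where "\<delta> = \<alpha> @ \<gamma>" by (auto simp: prefix_def)
  then show ?thesis using assms by (auto simp: S_le_def S_mult_append_left)
next
  case False
  have "smul (Some (\<delta>, E, \<delta>)) (Some (\<alpha>, A, \<alpha>)) \<noteq> Some (\<delta>, E, \<delta>)"
    by (rule S_mult_idempotent_cases[where \<alpha> = \<delta> and A = E and \<beta> = \<alpha> and C = A])
      (use False in auto)
  then show ?thesis using False by (auto simp: S_le_def)
qed

lemma S_le_same_word: "A \<noteq> {} \<Longrightarrow> A \<subseteq> C \<Longrightarrow> sle (Some (\<alpha>, A, \<alpha>)) (Some (\<alpha>, C, \<alpha>))"
  using S_le_idempotent_iff[of A \<alpha> \<alpha> C] by simp

lemma S_mult_longer_word:
  assumes "length \<beta> \<le> length \<alpha>" "smul (Some (\<beta>, C, \<beta>)) (Some (\<alpha>, A, \<alpha>)) \<noteq> None"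
  obtains D where "smul (Some (\<beta>, C, \<beta>)) (Some (\<alpha>, A, \<alpha>)) = Some (\<alpha>, D, \<alpha>)" "D \<subseteq> A"
  by (rule S_mult_idempotent_cases[where \<alpha> = \<beta> and A = C and \<beta> = \<alpha> and C = A])
    (use assms that in \<open>auto simp: mk_triple_def split: if_splits\<close>)

context
  assumes acc: "accommodating src rng lab B"
    and wlr: "weakly_left_resolving src rng lab B"
    and crc: "closed_rel_compl B"
begin

lemma Int_in_B: "A \<in> B \<Longrightarrow> C \<in> B \<Longrightarrow> A \<inter> C \<in> B"
  using acc by (auto simp: accommodating_def)

lemma Diff_in_B: "A \<in> B \<Longrightarrow> C \<in> B \<Longrightarrow> A - C \<in> B"
  using crc by (auto simp: closed_rel_compl_def)

text \<open>For a word that is not a label, \<open>r(A, \<alpha>) = {}\<close>, which lies in \<open>\<B>\<close> as \<open>A - A\<close>.\<close>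

lemma rel_range_in_B:
  assumes "A \<in> B"
  shows "rr A \<alpha> \<in> B"
proof (cases "\<alpha> \<in> Lplus src rng lab")
  case True
  then show ?thesis using acc assms by (simp add: accommodating_def)
next
  case False
  then have "rr A \<alpha> = A \<or> rr A \<alpha> = A - A" using rel_range_not_label by (cases "\<alpha> = []") auto
  then show ?thesis using assms Diff_in_B[OF assms assms] by auto
qed

lemma rel_range_Int: "A \<in> B \<Longrightarrow> C \<in> B \<Longrightarrow> rr (A \<inter> C) \<alpha> = rr A \<alpha> \<inter> rr C \<alpha>"
proof (cases "\<alpha> \<in> Lplus src rng lab")
  case False
  then show ?thesis by (cases "\<alpha> = []") (simp_all add: rel_range_not_label)
qed (use wlr in \<open>simp add: weakly_left_resolving_def\<close>)

lemma S_mult_ES: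
  assumes "x \<in> EE" "y \<in> EE"
  shows "smul x y \<in> EE"
proof (cases rule: ES_cases[OF assms(1)])
  case x: (2 \<alpha> A)
  show ?thesis
  proof (cases rule: ES_cases[OF assms(2)])
    case y: (2 \<beta> C)
    have meets_in_B: "rr A \<gamma> \<inter> C \<in> B" "A \<inter> rr C \<gamma> \<in> B" for \<gamma>
      using x y by (simp_all add: Int_in_B rel_range_in_B)
    show ?thesis
      unfolding x(1) y(1)
      by (rule S_mult_idempotent_cases[where \<alpha> = \<alpha> and A = A and \<beta> = \<beta> and C = C])
        (use x y meets_in_B in \<open>auto simp: mk_triple_def ES_Some_iff\<close>)
  qed simp
qed simp

lemma S_le_refl: "x \<in> EE \<Longrightarrow> sle x x"
  by (erule ES_cases) (auto intro: S_le_same_word)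

lemma S_le_trans:
  assumes "x \<in> EE" "y \<in> EE" "z \<in> EE" "sle x y" "sle y z"
  shows "sle x z"
proof (cases rule: ES_cases[OF assms(1)])
  case x: (2 \<alpha> A)
  show ?thesis
  proof (cases rule: ES_cases[OF assms(2)])
    case y: (2 \<beta> C)
    show ?thesis
    proof (cases rule: ES_cases[OF assms(3)])
      case z: (2 \<delta> D)
      obtain \<gamma>1 where "\<alpha> = \<beta> @ \<gamma>1" "A \<subseteq> rr C \<gamma>1"
        using assms(4) x y by (auto simp: S_le_idempotent_iff)
      moreover obtain \<gamma>2 where "\<beta> = \<delta> @ \<gamma>2" "C \<subseteq> rr D \<gamma>2"
        using assms(5) y z by (auto simp: S_le_idempotent_iff)
      moreover from calculation have "A \<subseteq> rr D (\<gamma>2 @ \<gamma>1)"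
        by (metis rel_range_append rel_range_mono order_trans)
      ultimately show ?thesis using x z by (auto simp: S_le_idempotent_iff)
    qed (use assms y in auto)
  qed (use assms x in auto)
qed simp

lemma S_mult_le:
  assumes "x \<in> EE" "y \<in> EE"
  shows "sle (smul x y) x" "sle (smul x y) y"
proof -
  have "sle (smul x y) x \<and> sle (smul x y) y"
  proof (cases rule: ES_cases[OF assms(1)])
    case x: (2 \<alpha> A)
    show ?thesis
    proof (cases rule: ES_cases[OF assms(2)])
      case y: (2 \<beta> C)
      show ?thesis
        unfolding x(1) y(1)
        by (rule S_mult_idempotent_cases[where \<alpha> = \<alpha> and A = A and \<beta> = \<beta> and C = C])
          (auto simp: mk_triple_def S_le_idempotent_iff intro: exI[of _ "[]"])
    qed simp
  qed simp
  then show "sle (smul x y) x" "sle (smul x y) y" by simp_all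
qed

text \<open>Weak left resolvingness makes the product the greatest lower bound.\<close>

lemma S_le_mult:
  assumes "w \<in> EE" "x \<in> EE" "y \<in> EE" "sle w x" "sle w y"
  shows "sle w (smul x y)"
proof (cases rule: ES_cases[OF assms(1)])
  case w: (2 \<delta> E)
  show ?thesis
  proof (cases rule: ES_cases[OF assms(2)])
    case x: (2 \<alpha> A)
    show ?thesis
    proof (cases rule: ES_cases[OF assms(3)])
      case y: (2 \<beta> C)
      obtain \<gamma>1 where \<gamma>1: "\<delta> = \<alpha> @ \<gamma>1" "E \<subseteq> rr A \<gamma>1"
        using assms(4) w x by (auto simp: S_le_idempotent_iff)
      obtain \<gamma>2 where \<gamma>2: "\<delta> = \<beta> @ \<gamma>2" "E \<subseteq> rr C \<gamma>2"
        using assms(5) w y by (auto simp: S_le_idempotent_iff)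
      have "prefix \<alpha> \<beta> \<or> prefix \<beta> \<alpha>" using \<gamma>1(1) \<gamma>2(1) by (metis prefix_same_cases prefixI)
      then show ?thesis
      proof (elim disjE prefixE)
        fix \<gamma> assume \<beta>: "\<beta> = \<alpha> @ \<gamma>"
        have "E \<subseteq> rr (rr A \<gamma>) \<gamma>2 \<inter> rr C \<gamma>2" using \<gamma>1 \<gamma>2 \<beta> by (auto simp: rel_range_append)
        also have "\<dots> = rr (rr A \<gamma> \<inter> C) \<gamma>2" using x y by (simp add: rel_range_Int rel_range_in_B)
        finally show ?thesis
          using w \<gamma>2(1) unfolding w(1) x(1) y(1) \<beta> S_mult_append_right
          by (auto simp: mk_triple_def S_le_idempotent_iff)
      next
        fix \<gamma> assume \<alpha>: "\<alpha> = \<beta> @ \<gamma>"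
        have "E \<subseteq> rr A \<gamma>1 \<inter> rr (rr C \<gamma>) \<gamma>1" using \<gamma>1 \<gamma>2 \<alpha> by (auto simp: rel_range_append)
        also have "\<dots> = rr (A \<inter> rr C \<gamma>) \<gamma>1" using x y by (simp add: rel_range_Int rel_range_in_B)
        finally show ?thesis
          using w \<gamma>1(1) unfolding w(1) x(1) y(1) \<alpha> S_mult_append_left
          by (auto simp: mk_triple_def S_le_idempotent_iff)
      qed
    qed (use assms w in auto)
  qed (use assms w in auto)
qed simp

lemma filter_ES: "filt \<xi> \<Longrightarrow> x \<in> \<xi> \<Longrightarrow> x \<in> EE"
  by (auto simp: is_filter_def)

lemma filter_nonzero: "filt \<xi> \<Longrightarrow> x \<in> \<xi> \<Longrightarrow> x \<noteq> None"
  unfolding is_filter_def by metis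

lemma filter_up: "filt \<xi> \<Longrightarrow> x \<in> \<xi> \<Longrightarrow> y \<in> EE \<Longrightarrow> sle x y \<Longrightarrow> y \<in> \<xi>"
  by (auto simp: is_filter_def)

lemma filter_down: "filt \<xi> \<Longrightarrow> x \<in> \<xi> \<Longrightarrow> y \<in> \<xi> \<Longrightarrow> \<exists>z\<in>\<xi>. sle z x \<and> sle z y"
  by (auto simp: is_filter_def)

lemma filter_mult:
  assumes f: "filt \<xi>" and "x \<in> \<xi>" "y \<in> \<xi>"
  shows "smul x y \<in> \<xi>"
proof -
  obtain z where z: "z \<in> \<xi>" "sle z x" "sle z y" using filter_down[OF f \<open>x \<in> \<xi>\<close> \<open>y \<in> \<xi>\<close>] by blast
  have E: "x \<in> EE" "y \<in> EE" "z \<in> EE" using filter_ES[OF f] assms z(1) by auto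
  have "sle z (smul x y)" using S_le_mult[OF E(3,1,2) z(2,3)] .
  then show ?thesis by (rule filter_up[OF f z(1) S_mult_ES[OF E(1,2)]])
qed

lemma S_mult_mono_right:
  assumes "z \<in> EE" "y \<in> EE" "y' \<in> EE" "sle y y'"
  shows "sle (smul z y) (smul z y')"
proof -
  have zy: "smul z y \<in> EE" using assms(1,2) by (rule S_mult_ES)
  have "sle (smul z y) y'" using S_le_trans[OF zy assms(2,3) S_mult_le(2)[OF assms(1,2)] assms(4)] .
  then show ?thesis using S_le_mult[OF zy assms(1,3) S_mult_le(1)[OF assms(1,2)]] by blast
qed

text \<open>If \<open>z \<notin> \<xi>\<close> met every element of the ultrafilter \<open>\<xi>\<close>, the products \<open>z y\<close> (\<open>y \<in> \<xi>\<close>)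
would generate a filter containing \<open>\<xi>\<close> and \<open>z\<close>.\<close>

lemma ultrafilter_disjoint_element:
  assumes u: "is_ultrafilter src rng lab B \<xi>" and z: "z \<in> EE" "z \<notin> \<xi>"
  shows "\<exists>y\<in>\<xi>. smul z y = None"
proof (rule ccontr)
  assume "\<not> ?thesis"
  then have meets: "\<And>y. y \<in> \<xi> \<Longrightarrow> smul z y \<noteq> None" by auto
  have f: "filt \<xi>" using u by (simp add: is_ultrafilter_def)
  have y: "\<And>y. y \<in> \<xi> \<Longrightarrow> y \<in> EE" using f by (rule filter_ES)
  have zy: "\<And>y. y \<in> \<xi> \<Longrightarrow> smul z y \<in> EE" using S_mult_ES[OF z(1) y] .
  define \<eta> where "\<eta> = {w \<in> EE. \<exists>y\<in>\<xi>. sle (smul z y) w}"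
  have sub: "\<xi> \<subseteq> \<eta>" unfolding \<eta>_def using y S_mult_le(2)[OF z(1)] by blast
  have "filt \<eta>" unfolding is_filter_def
  proof (intro conjI ballI impI)
    show "\<eta> \<subseteq> EE" "None \<notin> \<eta>" unfolding \<eta>_def using meets by auto
    show "\<eta> \<noteq> {}" using sub f by (auto simp: is_filter_def)
  next
    fix x w assume "x \<in> \<eta>" "w \<in> EE" "sle x w"
    then obtain y1 where "y1 \<in> \<xi>" "sle (smul z y1) x" "x \<in> EE" unfolding \<eta>_def by blast
    then have "sle (smul z y1) w" using S_le_trans[OF zy _ \<open>w \<in> EE\<close> _ \<open>sle x w\<close>] by blast
    with \<open>y1 \<in> \<xi>\<close> \<open>w \<in> EE\<close> show "w \<in> \<eta>" unfolding \<eta>_def by blast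
  next
    fix x1 x2 assume "x1 \<in> \<eta>" "x2 \<in> \<eta>"
    then obtain y1 y2 where y12: "y1 \<in> \<xi>" "sle (smul z y1) x1" "y2 \<in> \<xi>" "sle (smul z y2) x2"
      and x12: "x1 \<in> EE" "x2 \<in> EE"
      unfolding \<eta>_def by auto
    obtain y3 where y3: "y3 \<in> \<xi>" "sle y3 y1" "sle y3 y2" using filter_down[OF f y12(1,3)] by blast
    have "sle (smul z y3) x1"
      using S_le_trans[OF zy[OF y3(1)] zy[OF y12(1)] x12(1)
          S_mult_mono_right[OF z(1) y[OF y3(1)] y[OF y12(1)] y3(2)] y12(2)] .
    moreover have "sle (smul z y3) x2"
      using S_le_trans[OF zy[OF y3(1)] zy[OF y12(3)] x12(2)
          S_mult_mono_right[OF z(1) y[OF y3(1)] y[OF y12(3)] y3(3)] y12(4)] .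
    moreover have "smul z y3 \<in> \<eta>" unfolding \<eta>_def using zy y3(1) S_le_refl by blast
    ultimately show "\<exists>w\<in>\<eta>. sle w x1 \<and> sle w x2" by blast
  qed
  then have "\<eta> = \<xi>" using u sub by (simp add: is_ultrafilter_def)
  moreover obtain y0 where "y0 \<in> \<xi>" using f by (auto simp: is_filter_def)
  then have "z \<in> \<eta>" unfolding \<eta>_def using z(1) S_mult_le(1)[OF z(1) y] by blast
  ultimately show False using z(2) by simp
qed

lemma filter_finite_lower_bound:
  assumes f: "filt \<xi>" and "finite Z" and "x \<in> \<xi>" and "\<forall>z\<in>Z. g z \<in> \<xi>"
  shows "\<exists>y\<in>\<xi>. sle y x \<and> (\<forall>z\<in>Z. sle y (g z))"
  using assms(2-)
proof (induction Z)
  case empty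
  then show ?case using S_le_refl filter_ES[OF f] by blast
next
  case (insert z Z)
  then obtain y where y: "y \<in> \<xi>" "sle y x" "\<forall>z\<in>Z. sle y (g z)" by auto
  have gz: "g z \<in> \<xi>" using insert.prems by simp
  have E: "y \<in> EE" "g z \<in> EE" using filter_ES[OF f] y(1) gz by auto
  define y' where "y' = smul y (g z)"
  have y': "y' \<in> \<xi>" "y' \<in> EE" "sle y' y" "sle y' (g z)"
    unfolding y'_def using filter_mult[OF f y(1) gz] S_mult_ES[OF E] S_mult_le[OF E] by auto
  have below: "sle y' w" if "w \<in> \<xi>" "sle y w" for w
    using S_le_trans[OF y'(2) E(1) filter_ES[OF f that(1)] y'(3) that(2)] .
  have "sle y' x" using below[OF insert.prems(1) y(2)] .
  moreover have "\<forall>w\<in>Z. sle y' (g w)" using below insert.prems(2) y(3) by blast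
  ultimately show ?case using y'(1,4) by blast
qed

lemma ultrafilter_is_tight:
  assumes u: "is_ultrafilter src rng lab B \<xi>"
  shows "is_tight src rng lab B \<xi>"
proof -
  have f: "filt \<xi>" using u by (simp add: is_ultrafilter_def)
  have "Z \<inter> \<xi> \<noteq> {}" if x: "x \<in> \<xi>" and "finite Z" and cover: "is_cover src rng lab B x Z" for x Z
  proof
    assume disjoint: "Z \<inter> \<xi> = {}"
    have Z: "z \<in> EE" if "z \<in> Z" for z using cover that by (auto simp: is_cover_def)
    have "\<forall>z\<in>Z. \<exists>y. y \<in> \<xi> \<and> smul z y = None"
      using ultrafilter_disjoint_element[OF u Z] disjoint by blast
    from bchoice[OF this] obtain g where g: "\<forall>z\<in>Z. g z \<in> \<xi> \<and> smul z (g z) = None" by blast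
    then obtain y where y: "y \<in> \<xi>" "sle y x" "\<forall>z\<in>Z. sle y (g z)"
      using filter_finite_lower_bound[OF f \<open>finite Z\<close> x, of g] by blast
    have "\<forall>y\<in>EE. y \<noteq> None \<and> sle y x \<longrightarrow> (\<exists>z\<in>Z. smul z y \<noteq> None)"
      using cover by (simp add: is_cover_def)
    then obtain z where z: "z \<in> Z" "smul z y \<noteq> None"
      using filter_ES[OF f y(1)] filter_nonzero[OF f y(1)] y(2) by blast
    have "g z \<in> \<xi>" "smul z (g z) = None" using g z(1) by auto
    then have "sle (smul z y) None"
      using S_mult_mono_right[OF Z[OF z(1)] filter_ES[OF f y(1)] filter_ES[OF f] y(3)[rule_format, OF z(1)]]
      by simp
    then show False using z(2) by simp
  qed
  then show ?thesis using f by (auto simp: is_tight_def)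
qed

lemma filter_elementE:
  assumes "filt \<xi>" "x \<in> \<xi>"
  obtains \<alpha> A where "x = Some (\<alpha>, A, \<alpha>)"
  using ES_cases[OF filter_ES[OF assms]] filter_nonzero[OF assms] by metis

lemma infinite_type_long_word:
  assumes f: "filt \<xi>" and it: "infinite_type \<xi>"
  shows "\<exists>\<alpha>\<in>filter_words \<xi>. n \<le> length \<alpha>"
proof (induction n)
  case 0
  obtain x where "x \<in> \<xi>" using f by (auto simp: is_filter_def)
  then obtain \<alpha> A where "Some (\<alpha>, A, \<alpha>) \<in> \<xi>" using filter_elementE[OF f] by metis
  then show ?case by (auto simp: filter_words_def)
next
  case (Suc n)
  then obtain \<alpha> where "\<alpha> \<in> filter_words \<xi>" "n \<le> length \<alpha>" by blast
  moreover from this obtain \<beta> where "\<beta> \<in> filter_words \<xi>" "length \<alpha> < length \<beta>"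
    using it by (auto simp: infinite_type_def not_le)
  ultimately have "\<beta> \<in> filter_words \<xi>" "Suc n \<le> length \<beta>" by auto
  then show ?case by blast
qed

lemma is_cover_split:
  assumes x: "Some (\<alpha>, A, \<alpha>) \<in> EE" and u: "Some (\<alpha>, D, \<alpha>) \<in> EE"
    and "D \<subseteq> A" "A - D \<noteq> {}"
  shows "is_cover src rng lab B (Some (\<alpha>, A, \<alpha>)) {Some (\<alpha>, D, \<alpha>), Some (\<alpha>, A - D, \<alpha>)}"
  unfolding is_cover_def
proof (intro conjI ballI impI)
  have "Some (\<alpha>, A - D, \<alpha>) \<in> EE" using assms by (auto simp: ES_Some_iff Diff_in_B)
  then show "{Some (\<alpha>, D, \<alpha>), Some (\<alpha>, A - D, \<alpha>)} \<subseteq> {y \<in> EE. sle y (Some (\<alpha>, A, \<alpha>))}"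
    using assms by (auto simp: ES_Some_iff S_le_same_word)
next
  fix y assume yE: "y \<in> EE" and "y \<noteq> None \<and> sle y (Some (\<alpha>, A, \<alpha>))"
  then have "y \<noteq> None" "sle y (Some (\<alpha>, A, \<alpha>))" by simp_all
  obtain \<delta> E where y: "y = Some (\<delta>, E, \<delta>)" "E \<noteq> {}"
    by (cases rule: ES_cases[OF yE]) (use \<open>y \<noteq> None\<close> in blast)+
  then obtain \<gamma> where \<delta>: "\<delta> = \<alpha> @ \<gamma>" and "E \<subseteq> rr A \<gamma>"
    using \<open>sle y _\<close> by (auto simp: S_le_idempotent_iff)
  moreover have "rr A \<gamma> = rr D \<gamma> \<union> rr (A - D) \<gamma>"
    using rel_range_Un[of D "A - D" \<gamma>] \<open>D \<subseteq> A\<close> by (simp add: Un_absorb1)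
  ultimately have "rr D \<gamma> \<inter> E \<noteq> {} \<or> rr (A - D) \<gamma> \<inter> E \<noteq> {}" using y(2) by blast
  then have "smul (Some (\<alpha>, D, \<alpha>)) y \<noteq> None \<or> smul (Some (\<alpha>, A - D, \<alpha>)) y \<noteq> None"
    using S_mult_append_right[of \<alpha> D \<gamma> E] S_mult_append_right[of \<alpha> "A - D" \<gamma> E]
    by (simp add: y(1) \<delta>)
  then show "\<exists>w\<in>{Some (\<alpha>, D, \<alpha>), Some (\<alpha>, A - D, \<alpha>)}. smul w y \<noteq> None" by blast
qed

lemma tight_infinite_type_is_ultrafilter:
  assumes t: "is_tight src rng lab B \<xi>" and it: "infinite_type \<xi>"
  shows "is_ultrafilter src rng lab B \<xi>"
proof -
  have f: "filt \<xi>" using t by (simp add: is_tight_def)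
  have tight: "\<And>x Z. x \<in> \<xi> \<Longrightarrow> finite Z \<Longrightarrow> is_cover src rng lab B x Z \<Longrightarrow> Z \<inter> \<xi> \<noteq> {}"
    using t by (simp add: is_tight_def)
  have "z \<in> \<xi>" if fe: "filt \<eta>" and sub: "\<xi> \<subseteq> \<eta>" and "z \<in> \<eta>" for \<eta> z
  proof -
    obtain \<beta> C where z: "z = Some (\<beta>, C, \<beta>)" using filter_elementE[OF fe \<open>z \<in> \<eta>\<close>] .
    have zE: "z \<in> EE" using filter_ES[OF fe \<open>z \<in> \<eta>\<close>] .
    obtain \<alpha> A where "Some (\<alpha>, A, \<alpha>) \<in> \<xi>" and "length \<beta> \<le> length \<alpha>"
      using infinite_type_long_word[OF f it, of "length \<beta>"] by (auto simp: filter_words_def)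
    define x where "x = Some (\<alpha>, A, \<alpha>)"
    have x: "x \<in> \<xi>" "x \<in> EE" using \<open>Some (\<alpha>, A, \<alpha>) \<in> \<xi>\<close> filter_ES[OF f] by (auto simp: x_def)
    define u where "u = smul z x"
    have u: "u \<in> \<eta>" "u \<in> EE" "u \<noteq> None" "sle u z"
      unfolding u_def using filter_mult[OF fe \<open>z \<in> \<eta>\<close>] filter_nonzero[OF fe] S_mult_ES[OF zE x(2)]
        S_mult_le[OF zE x(2)] x(1) sub by auto
    obtain D where uD: "u = Some (\<alpha>, D, \<alpha>)" and "D \<subseteq> A"
      using S_mult_longer_word[OF \<open>length \<beta> \<le> length \<alpha>\<close>] u(3) unfolding u_def z x_def by blast
    show "z \<in> \<xi>"
    proof (rule ccontr)
      assume "z \<notin> \<xi>"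
      then have "u \<notin> \<xi>" using filter_up[OF f _ zE u(4)] by blast
      then have "A - D \<noteq> {}" using x(1) \<open>D \<subseteq> A\<close> by (auto simp: x_def uD)
      then have cover: "is_cover src rng lab B x {u, Some (\<alpha>, A - D, \<alpha>)}"
        using is_cover_split x(2) u(2) \<open>D \<subseteq> A\<close> by (simp add: x_def uD)
      have "{u, Some (\<alpha>, A - D, \<alpha>)} \<inter> \<xi> \<noteq> {}" using tight[OF x(1) _ cover] by simp
      then have "Some (\<alpha>, A - D, \<alpha>) \<in> \<eta>" using \<open>u \<notin> \<xi>\<close> sub by blast
      then have "smul u (Some (\<alpha>, A - D, \<alpha>)) \<in> \<eta>" using filter_mult[OF fe u(1)] by blast
      moreover have "smul u (Some (\<alpha>, A - D, \<alpha>)) = None" by (simp add: uD S_mult_same_word)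
      ultimately show False using filter_nonzero[OF fe] by blast
    qed
  qed
  then show ?thesis using f by (auto simp: is_ultrafilter_def)
qed

end

end

theorem mainTheorem16:
  fixes src rng :: "'e \<Rightarrow> 'v" and lab :: "'e \<Rightarrow> 'a" and B :: "'v set set"
    and \<xi> :: "('a, 'v) selt set"
  assumes "countable (UNIV :: 'v set)" and "countable (UNIV :: 'e set)"
    and "accommodating src rng lab B"
    and "weakly_left_resolving src rng lab B"
    and "closed_rel_compl B"
    and "is_filter src rng lab B \<xi>"
    and "infinite_type \<xi>"
  shows "is_tight src rng lab B \<xi> \<longleftrightarrow> is_ultrafilter src rng lab B \<xi>"
  using tight_infinite_type_is_ultrafilter[OF assms(3-5) _ assms(7)]
    ultrafilter_is_tight[OF assms(3-5)]
  by blast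

end
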